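(* Let $(\Lambda(x_1,x_2,x_3,x_4;y_1,y_2,y_3,y_4),\partial)$ be as in the context, let $\alpha\in\mathrm{aut}_\sharp$ with $\alpha(x_1)=x_1$, $\alpha(x_i)=x_i+A_i$ ($i=2,3,4$), and write $P_1=\sum_{k=0}^{s}\theta_k x_4^k$ with $\theta_k\in\mathbb{Q}[x_1,x_2,x_3]$, $\theta_s\neq0$. Then for every $0\le i\le s-1$, $$\alpha(\theta_i)=\theta_i+\sum_{k=1}^{s-i}(-1)^k\binom{k+i}{k}\theta_{k+i}A_4^{k}.$$
   Context: Setting: $x_1,\dots,x_4$ are generators of positive even degrees with $|x_1|\le|x_2|\le|x_3|\le|x_4|$, $y_1,\dots,y_4$ are of odd degree, $(\Lambda(x_1,\dots,x_4;y_1,\dots,y_4),\partial)$ is the free graded-commutative cochain algebra over $\mathbb{Q}$ with $\partial x_i=0$, $\partial y_i=P_i\in\mathbb{Q}[x_1,\dots,x_4]$, where $P_1,\dots,P_4$ is a regular sequence and $|P_1|\le|P_2|\le|P_3|\le|P_4|$. $\mathrm{aut}_\sharp$ is the group of cochain algebra automorphisms inducing the identity on the indecomposables $\mathrm{span}(x_i,y_i)$; for $\alpha\in\mathrm{aut}_\sharp$ one has $\alpha(x_1)=x_1$ and $\alpha(x_i)=x_i+A_i$ with $A_i$ polynomials in the $x_j$. *)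

theory Defs
  imports Complex_Main "HOL-Library.Poly_Mapping"
begin

datatype idx = I1 | I2 | I3 | I4

fun ix :: "idx \<Rightarrow> nat" where
  "ix I1 = 1" | "ix I2 = 2" | "ix I3 = 3" | "ix I4 = 4"

definition allidx :: "idx set" where "allidx = {I1, I2, I3, I4}"

type_synonym mpoly = "(idx \<Rightarrow>\<^sub>0 nat) \<Rightarrow>\<^sub>0 rat"

definition Xv :: "idx \<Rightarrow> mpoly" where
  "Xv i = Poly_Mapping.single (Poly_Mapping.single i 1) 1"

definition const :: "rat \<Rightarrow> mpoly" where
  "const c = Poly_Mapping.single 0 c"

definition poly_in_vars :: "idx set \<Rightarrow> mpoly \<Rightarrow> bool" where
  "poly_in_vars V p \<longleftrightarrow> (\<forall>m. Poly_Mapping.lookup p m \<noteq> 0 \<longrightarrow> Poly_Mapping.keys m \<subseteq> V)"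

definition mdeg :: "(idx \<Rightarrow> nat) \<Rightarrow> (idx \<Rightarrow>\<^sub>0 nat) \<Rightarrow> nat" where
  "mdeg d m = (\<Sum>i\<in>allidx. Poly_Mapping.lookup m i * d i)"

definition poly_hom :: "(idx \<Rightarrow> nat) \<Rightarrow> nat \<Rightarrow> mpoly \<Rightarrow> bool" where
  "poly_hom d n p \<longleftrightarrow> (\<forall>m. Poly_Mapping.lookup p m \<noteq> 0 \<longrightarrow> mdeg d m = n)"

definition ideal_before :: "(idx \<Rightarrow> mpoly) \<Rightarrow> nat \<Rightarrow> mpoly set" where
  "ideal_before P k = {p. \<exists>g. p = (\<Sum>j\<in>{j\<in>allidx. ix j < k}. g j * P j)}"

definition regular_seq :: "(idx \<Rightarrow> mpoly) \<Rightarrow> bool" where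
  "regular_seq P \<longleftrightarrow>
     (\<forall>j\<in>allidx. \<forall>f. f * P j \<in> ideal_before P (ix j) \<longrightarrow> f \<in> ideal_before P (ix j))
     \<and> 1 \<notin> ideal_before P 5"

text \<open>An element is written as sum over S \<subseteq> {1..4} of f(S) * y_S, where
  y_S = y_{s1} y_{s2} ... y_{sk} with s1 < ... < sk and f(S) in Q[x].\<close>
type_synonym lam = "idx set \<Rightarrow> mpoly"

definition lzero :: lam where "lzero = (\<lambda>S. 0)"
definition lone :: lam where "lone = (\<lambda>S. if S = {} then 1 else 0)"
definition ladd :: "lam \<Rightarrow> lam \<Rightarrow> lam" where "ladd f g = (\<lambda>S. f S + g S)"
definition lsub :: "lam \<Rightarrow> lam \<Rightarrow> lam" where "lsub f g = (\<lambda>S. f S - g S)"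
definition lscale :: "rat \<Rightarrow> lam \<Rightarrow> lam" where "lscale c f = (\<lambda>S. const c * f S)"

definition emb :: "mpoly \<Rightarrow> lam" where "emb p = (\<lambda>S. if S = {} then p else 0)"

definition ygen :: "idx \<Rightarrow> lam" where "ygen i = (\<lambda>S. if S = {i} then 1 else 0)"

text \<open>Sign of y_A * y_B = sgn A B * y_(A \<union> B) for disjoint A, B.\<close>
definition ysgn :: "idx set \<Rightarrow> idx set \<Rightarrow> mpoly" where
  "ysgn A B = (-1) ^ card {(a, b). a \<in> A \<and> b \<in> B \<and> ix b < ix a}"

definition lmul :: "lam \<Rightarrow> lam \<Rightarrow> lam" where
  "lmul f g = (\<lambda>S. \<Sum>A\<in>Pow S. ysgn A (S - A) * f A * g (S - A))"

text \<open>The differential: the unique derivation with d x_i = 0, d y_i = P_i.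
  d(p y_S) = sum over j in S of (-1)^#{t in S, t<j} p P_j y_(S-{j}).\<close>
definition ldiff :: "(idx \<Rightarrow> mpoly) \<Rightarrow> lam \<Rightarrow> lam" where
  "ldiff P f = (\<lambda>T. \<Sum>j\<in>allidx - T.
      (-1) ^ card {t\<in>T. ix t < ix j} * P j * f (insert j T))"

text \<open>Grading: |x_i| = d i, |y_i| = e i.\<close>
definition ydeg :: "(idx \<Rightarrow> nat) \<Rightarrow> idx set \<Rightarrow> nat" where
  "ydeg e S = (\<Sum>i\<in>S. e i)"

definition lhom :: "(idx \<Rightarrow> nat) \<Rightarrow> (idx \<Rightarrow> nat) \<Rightarrow> nat \<Rightarrow> lam \<Rightarrow> bool" where
  "lhom d e n f \<longleftrightarrow> (\<forall>S m. Poly_Mapping.lookup (f S) m \<noteq> 0 \<longrightarrow> mdeg d m + ydeg e S = n)"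

text \<open>Lambda^+ : elements of positive degree (all generators have positive degree,
  so these are the elements with vanishing constant term).\<close>
definition lplus :: "lam set" where
  "lplus = {f. Poly_Mapping.lookup (f {}) 0 = 0}"

inductive_set ldec :: "lam set" where
  ldec_zero: "lzero \<in> ldec"
| ldec_step: "a \<in> lplus \<Longrightarrow> b \<in> lplus \<Longrightarrow> c \<in> ldec \<Longrightarrow> ladd (lmul a b) c \<in> ldec"

definition cochain_aut :: "(idx \<Rightarrow> nat) \<Rightarrow> (idx \<Rightarrow> nat) \<Rightarrow> (idx \<Rightarrow> mpoly) \<Rightarrow> (lam \<Rightarrow> lam) \<Rightarrow> bool" where
  "cochain_aut d e P \<alpha> \<longleftrightarrow>
     bij \<alpha>
     \<and> (\<forall>f g. \<alpha> (ladd f g) = ladd (\<alpha> f) (\<alpha> g))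
     \<and> (\<forall>c f. \<alpha> (lscale c f) = lscale c (\<alpha> f))
     \<and> (\<forall>f g. \<alpha> (lmul f g) = lmul (\<alpha> f) (\<alpha> g))
     \<and> \<alpha> lone = lone
     \<and> (\<forall>n f. lhom d e n f \<longrightarrow> lhom d e n (\<alpha> f))
     \<and> (\<forall>f. \<alpha> (ldiff P f) = ldiff P (\<alpha> f))"

text \<open>aut_sharp: automorphisms inducing the identity on the indecomposables
  Lambda^+ / (Lambda^+ . Lambda^+).\<close>
definition aut_sharp :: "(idx \<Rightarrow> nat) \<Rightarrow> (idx \<Rightarrow> nat) \<Rightarrow> (idx \<Rightarrow> mpoly) \<Rightarrow> (lam \<Rightarrow> lam) set" where
  "aut_sharp d e P = {\<alpha>. cochain_aut d e P \<alpha> \<and> (\<forall>v\<in>lplus. lsub (\<alpha> v) v \<in> ldec)}"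

definition setting :: "(idx \<Rightarrow> nat) \<Rightarrow> (idx \<Rightarrow> nat) \<Rightarrow> (idx \<Rightarrow> mpoly) \<Rightarrow> bool" where
  "setting d e P \<longleftrightarrow>
     (\<forall>i. d i > 0 \<and> even (d i)) \<and> (\<forall>i. odd (e i))
     \<and> d I1 \<le> d I2 \<and> d I2 \<le> d I3 \<and> d I3 \<le> d I4
     \<and> (\<forall>i. poly_hom d (e i + 1) (P i))
     \<and> regular_seq P
     \<and> e I1 \<le> e I2 \<and> e I2 \<le> e I3 \<and> e I3 \<le> e I4"

end

theory Submission
  imports Defs
begin

text \<open>Since all \<open>x\<^sub>i\<close> have even degree and \<open>y\<^sub>1\<close> has the least odd degree, the element
  \<open>\<alpha>(y\<^sub>1)\<close>, which differs from \<open>y\<^sub>1\<close> by a decomposable, must be \<open>y\<^sub>1\<close> itself;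
  hence \<open>\<alpha>\<close> fixes \<open>P\<^sub>1 = \<partial>y\<^sub>1\<close>.  On \<open>\<rat>[x\<^sub>1,\<dots>,x\<^sub>4]\<close> the map \<open>\<alpha>\<close> restricts to a ring
  endomorphism sending \<open>x\<^sub>4\<close> to \<open>x\<^sub>4 + A\<^sub>4\<close> and preserving \<open>\<rat>[x\<^sub>1,x\<^sub>2,x\<^sub>3]\<close>, because for degree
  reasons no \<open>A\<^sub>i\<close> involves \<open>x\<^sub>4\<close>.  Applying \<open>\<alpha>\<close> to \<open>P\<^sub>1 = \<Sum> \<theta>\<^sub>k x\<^sub>4\<^sup>k\<close> gives
  \<open>\<Sum> \<alpha>(\<theta>\<^sub>k) (x\<^sub>4 + A\<^sub>4)\<^sup>k = \<Sum> \<theta>\<^sub>k x\<^sub>4\<^sup>k\<close>.  As \<open>x\<^sub>4\<close>, and hence \<open>x\<^sub>4 + A\<^sub>4\<close>, is algebraically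
  independent over \<open>\<rat>[x\<^sub>1,x\<^sub>2,x\<^sub>3]\<close>, the \<open>\<alpha>(\<theta>\<^sub>k)\<close> are the coefficients of the Taylor shift of
  \<open>\<Sum> \<theta>\<^sub>k t\<^sup>k\<close> by \<open>-A\<^sub>4\<close>, which is the claimed formula.\<close>

abbreviation lookup :: "('a \<Rightarrow>\<^sub>0 'b::zero) \<Rightarrow> 'a \<Rightarrow> 'b"
  where "lookup \<equiv> Poly_Mapping.lookup"

abbreviation single :: "'a \<Rightarrow> 'b::zero \<Rightarrow> 'a \<Rightarrow>\<^sub>0 'b"
  where "single \<equiv> Poly_Mapping.single"

abbreviation keys :: "('a \<Rightarrow>\<^sub>0 'b::zero) \<Rightarrow> 'a set"
  where "keys \<equiv> Poly_Mapping.keys"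

lemma lookup_mult_neq_zeroE:
  fixes p q :: "'a::comm_monoid_add \<Rightarrow>\<^sub>0 'b::comm_semiring_0"
  assumes "lookup (p * q) x \<noteq> 0"
  obtains a b where "lookup p a \<noteq> 0" "lookup q b \<noteq> 0" "x = a + b"
  using keys_mult[of p q] assms by (auto simp: in_keys_iff)

lemma lookup_mult_single_add:
  fixes p :: "'a::cancel_comm_monoid_add \<Rightarrow>\<^sub>0 'b::comm_semiring_0"
  shows "lookup (p * single k b) (l + k) = lookup p l * b"
proof -
  have "(lookup (single k b) q when l + k = l' + q) = ((b when l' = l) when q = k)" for l' q
    by (auto simp: lookup_single when_def)
  then show ?thesis
    by (simp add: lookup_mult mult_when)
qed

lemma monomial_add_eq_zero:
  fixes a b :: "'v \<Rightarrow>\<^sub>0 nat"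
  assumes "a + b = 0"
  shows "a = 0"
proof (rule poly_mapping_eqI)
  fix k
  have "lookup a k + lookup b k = 0"
    using arg_cong[OF assms, of "\<lambda>m. lookup m k"] by (simp add: lookup_add)
  then show "lookup a k = lookup 0 k" by simp
qed

lemma monomial_add_eq_single_one:
  fixes a b :: "'v \<Rightarrow>\<^sub>0 nat"
  assumes "a + b = single j 1"
  shows "a = 0 \<or> b = 0"
proof -
  have ab: "lookup a k + lookup b k = (1 when k = j)" for k
    using arg_cong[OF assms, of "\<lambda>m. lookup m k"] by (simp add: lookup_add lookup_single eq_commute)
  have "lookup a j = 0 \<or> lookup b j = 0"
    using ab[of j] by simp arith
  moreover have "lookup a k = 0 \<and> lookup b k = 0" if "k \<noteq> j" for k
    using ab[of k] that by simp
  ultimately show ?thesis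
    by (metis lookup_zero poly_mapping_eqI)
qed

lemma lookup_mult_zero_if_const_zero:
  fixes p q :: "('v \<Rightarrow>\<^sub>0 nat) \<Rightarrow>\<^sub>0 'b::comm_semiring_0"
  assumes "lookup p 0 = 0"
  shows "lookup (p * q) 0 = 0"
proof (rule ccontr)
  assume "lookup (p * q) 0 \<noteq> 0"
  then obtain a b where "lookup p a \<noteq> 0" "0 = a + b"
    by (rule lookup_mult_neq_zeroE)
  then show False
    using assms monomial_add_eq_zero by metis
qed

lemma lookup_mult_linear_zero_if_const_zero:
  fixes p q :: "('v \<Rightarrow>\<^sub>0 nat) \<Rightarrow>\<^sub>0 'b::comm_semiring_0"
  assumes "lookup p 0 = 0" "lookup q 0 = 0"
  shows "lookup (p * q) (single j 1) = 0"
proof (rule ccontr)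
  assume "lookup (p * q) (single j 1) \<noteq> 0"
  then obtain a b where "lookup p a \<noteq> 0" "lookup q b \<noteq> 0" "single j 1 = a + b"
    by (rule lookup_mult_neq_zeroE)
  then show False
    using assms monomial_add_eq_single_one by metis
qed

lemma poly_eq_sum_monomials: "p = (\<Sum>m\<in>keys p. single m (lookup p m))"
  by (rule poly_mapping_eqI) (simp add: lookup_sum lookup_single when_def in_keys_iff)

lemma Xv_power: "Xv i ^ n = single (single i n) 1"
  by (induction n) (simp_all add: Xv_def mult_single single_add[symmetric] add.commute)

lemma monomial_eq_prod_Xv: "single m c = const c * (\<Prod>i\<in>keys m. Xv i ^ lookup m i)"
proof -
  have prod_single: "(\<Prod>i\<in>K. single (f i) (1::rat)) = single (\<Sum>i\<in>K. f i) 1" for K f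
    by (induction K rule: infinite_finite_induct) (simp_all add: mult_single)
  have "(\<Sum>i\<in>keys m. single i (lookup m i)) = m"
    by (rule poly_mapping_eqI) (simp add: lookup_sum lookup_single when_def in_keys_iff)
  then show ?thesis
    by (simp add: Xv_power prod_single const_def mult_single)
qed

lemma const_zero [simp]: "const 0 = 0"
  by (simp add: const_def)

lemma const_one [simp]: "const 1 = 1"
  by (simp add: const_def)

lemma const_of_nat [simp]: "const (of_nat n) = of_nat n"
  by (simp add: const_def)

lemma poly_in_vars_UNIV: "poly_in_vars UNIV p"
  by (simp add: poly_in_vars_def)

lemma poly_in_vars_const: "poly_in_vars V (const c)"
  by (simp add: poly_in_vars_def const_def lookup_single when_def)

lemma poly_in_vars_of_nat: "poly_in_vars V (of_nat n)"
  using poly_in_vars_const[of V "of_nat n"] by simp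

lemma poly_in_vars_Xv: "i \<in> V \<Longrightarrow> poly_in_vars V (Xv i)"
  by (simp add: poly_in_vars_def Xv_def lookup_single when_def)

lemma poly_in_vars_add: "poly_in_vars V p \<Longrightarrow> poly_in_vars V q \<Longrightarrow> poly_in_vars V (p + q)"
  unfolding poly_in_vars_def lookup_add by (metis add.left_neutral)

lemma poly_in_vars_uminus: "poly_in_vars V p \<Longrightarrow> poly_in_vars V (- p)"
  by (simp add: poly_in_vars_def)

lemma poly_in_vars_mult:
  assumes "poly_in_vars V p" "poly_in_vars V q"
  shows "poly_in_vars V (p * q)"
  unfolding poly_in_vars_def
proof (intro allI impI)
  fix m
  assume "lookup (p * q) m \<noteq> 0"
  then obtain a b where "lookup p a \<noteq> 0" "lookup q b \<noteq> 0" "m = a + b"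
    by (rule lookup_mult_neq_zeroE)
  then show "keys m \<subseteq> V"
    using assms keys_add[of a b] unfolding poly_in_vars_def by blast
qed

lemma poly_in_vars_power: "poly_in_vars V p \<Longrightarrow> poly_in_vars V (p ^ n)"
  using poly_in_vars_const[of V 1] by (induction n) (auto intro: poly_in_vars_mult)

lemma poly_in_vars_sum:
  "(\<And>k. k \<in> K \<Longrightarrow> poly_in_vars V (f k)) \<Longrightarrow> poly_in_vars V (\<Sum>k\<in>K. f k)"
  using poly_in_vars_const[of V 0]
  by (induction K rule: infinite_finite_induct) (auto intro: poly_in_vars_add)

lemma poly_in_vars_induct [consumes 1, case_names const Xv add mult]:
  assumes "poly_in_vars V p"
    and const: "\<And>c. Q (const c)"
    and Xv: "\<And>i. i \<in> V \<Longrightarrow> Q (Xv i)"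
    and add: "\<And>p q. Q p \<Longrightarrow> Q q \<Longrightarrow> Q (p + q)"
    and mult: "\<And>p q. Q p \<Longrightarrow> Q q \<Longrightarrow> Q (p * q)"
  shows "Q p"
proof -
  have sum: "Q (\<Sum>k\<in>K. f k)" if "\<And>k. k \<in> K \<Longrightarrow> Q (f k)" for K and f :: "'a \<Rightarrow> mpoly"
    using that const[of 0] by (induction K rule: infinite_finite_induct) (auto intro: add)
  have prod: "Q (\<Prod>k\<in>K. f k)" if "\<And>k. k \<in> K \<Longrightarrow> Q (f k)" for K and f :: "'a \<Rightarrow> mpoly"
    using that const[of 1] by (induction K rule: infinite_finite_induct) (auto intro: mult)
  have power: "Q (q ^ n)" if "Q q" for q n
    using that const[of 1] by (induction n) (auto intro: mult)
  have "Q (single m c)" if "keys m \<subseteq> V" for m c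
    unfolding monomial_eq_prod_Xv using that by (blast intro: mult const prod power Xv)
  then show ?thesis
    using assms(1) by (subst poly_eq_sum_monomials) (auto intro!: sum simp: poly_in_vars_def in_keys_iff)
qed

lemma poly_in_vars_Compl_singleton_iff:
  "poly_in_vars (- {i}) p \<longleftrightarrow> (\<forall>m. lookup p m \<noteq> 0 \<longrightarrow> lookup m i = 0)"
  by (auto simp: poly_in_vars_def in_keys_iff)

lemma Compl_I4: "- {I4} = {I1, I2, I3}"
  using idx.exhaust by auto

lemma lookup_mult_Xv_power:
  assumes "poly_in_vars V c" "i \<notin> V" "lookup m i = 0"
  shows "lookup (c * Xv i ^ j) (m + single i k) = (if k = j then lookup c m else 0)"
proof (cases "k = j")
  case True
  then show ?thesis by (simp add: Xv_power lookup_mult_single_add)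
next
  case False
  have "lookup (c * Xv i ^ j) (m + single i k) = 0"
  proof (rule ccontr)
    assume "lookup (c * Xv i ^ j) (m + single i k) \<noteq> 0"
    then obtain a b where a: "lookup c a \<noteq> 0" and b: "lookup (Xv i ^ j) b \<noteq> 0"
      and ab: "m + single i k = a + b"
      by (rule lookup_mult_neq_zeroE)
    from a have "lookup a i = 0"
      using assms(1,2) by (metis poly_in_vars_def in_keys_iff subsetD)
    moreover from b have "b = single i j"
      by (simp add: Xv_power lookup_single when_def split: if_splits)
    ultimately have "k = j"
      using arg_cong[OF ab, of "\<lambda>m. lookup m i"] assms(3) by (simp add: lookup_add)
    with False show False ..
  qed
  with False show ?thesis by simp
qed

lemma sum_Xv_power_coeffs_eq:
  assumes "i \<notin> V" "\<And>k. poly_in_vars V (c k)" "\<And>k. poly_in_vars V (c' k)"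
    and "(\<Sum>k\<le>s. c k * Xv i ^ k) = (\<Sum>k\<le>s. c' k * Xv i ^ k)" "j \<le> s"
  shows "c j = c' j"
proof (rule poly_mapping_eqI)
  have coeff: "lookup (\<Sum>k\<le>s. f k * Xv i ^ k) (m + single i j) = lookup (f j) m"
    if "\<And>k. poly_in_vars V (f k)" "lookup m i = 0" for f m
    using assms(5) by (simp add: lookup_sum lookup_mult_Xv_power[OF that(1) assms(1) that(2)])
  fix m
  show "lookup (c j) m = lookup (c' j) m"
  proof (cases "lookup m i = 0")
    case True
    then show ?thesis using coeff[of c m] coeff[of c' m] assms(2-4) by metis
  next
    case False
    then show ?thesis using assms(1-3) by (metis poly_in_vars_def in_keys_iff subsetD)
  qed
qed

section \<open>Taylor shifts\<close>

lemma sum_mult_power_add_eq: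
  fixes Y B :: "'a::comm_semiring_1"
  shows "(\<Sum>k\<le>s. f k * (Y + B) ^ k) =
         (\<Sum>j\<le>s. (\<Sum>k\<le>s. f k * of_nat (k choose j) * B ^ (k - j)) * Y ^ j)"
proof -
  have "f k * (Y + B) ^ k = (\<Sum>j\<le>s. f k * of_nat (k choose j) * B ^ (k - j) * Y ^ j)"
    if "k \<le> s" for k
  proof -
    have "f k * (Y + B) ^ k = (\<Sum>j\<le>k. f k * of_nat (k choose j) * B ^ (k - j) * Y ^ j)"
      by (simp add: binomial_ring sum_distrib_left mult_ac)
    also have "\<dots> = (\<Sum>j\<le>s. f k * of_nat (k choose j) * B ^ (k - j) * Y ^ j)"
      using that by (intro sum.mono_neutral_left) (auto simp: binomial_eq_0)
    finally show ?thesis .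
  qed
  then have "(\<Sum>k\<le>s. f k * (Y + B) ^ k) =
      (\<Sum>k\<le>s. \<Sum>j\<le>s. f k * of_nat (k choose j) * B ^ (k - j) * Y ^ j)"
    by (intro sum.cong) auto
  also have "\<dots> = (\<Sum>j\<le>s. (\<Sum>k\<le>s. f k * of_nat (k choose j) * B ^ (k - j)) * Y ^ j)"
    by (subst sum.swap) (simp add: sum_distrib_right)
  finally show ?thesis .
qed

text \<open>The coefficient map is triangular with ones on the diagonal; solve from the top down.\<close>
lemma binomial_shift_coeffs_inj:
  fixes \<phi> \<psi> :: "nat \<Rightarrow> 'a::comm_ring_1"
  assumes "\<And>j. j \<le> s \<Longrightarrow> (\<Sum>k\<le>s. \<phi> k * of_nat (k choose j) * B ^ (k - j)) =
                            (\<Sum>k\<le>s. \<psi> k * of_nat (k choose j) * B ^ (k - j))"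
    and "j \<le> s"
  shows "\<phi> j = \<psi> j"
  using assms(2)
proof (induction "s - j" arbitrary: j rule: less_induct)
  case less
  define D where "D k = (\<phi> k - \<psi> k) * of_nat (k choose j) * B ^ (k - j)" for k
  have "D k = 0" if "k \<in> {..s} - {j}" for k
  proof (cases "k < j")
    case True
    then show ?thesis by (simp add: D_def binomial_eq_0)
  next
    case False
    with that have "\<phi> k = \<psi> k" using less.hyps by auto
    then show ?thesis by (simp add: D_def)
  qed
  then have "(\<Sum>k\<le>s. D k) = D j"
    using less.prems by (subst sum.remove[of _ j]) auto
  moreover have "(\<Sum>k\<le>s. D k) = 0"
    using assms(1)[OF less.prems] by (simp add: D_def sum_subtractf algebra_simps)
  ultimately show ?case by (simp add: D_def)
qed

lemma sum_Xv_shift_power_coeffs_eq: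
  assumes "i \<notin> V" "poly_in_vars V B" "\<And>k. poly_in_vars V (\<phi> k)" "\<And>k. poly_in_vars V (\<psi> k)"
    and "(\<Sum>k\<le>s. \<phi> k * (Xv i + B) ^ k) = (\<Sum>k\<le>s. \<psi> k * (Xv i + B) ^ k)" "j \<le> s"
  shows "\<phi> j = \<psi> j"
proof (rule binomial_shift_coeffs_inj[OF _ assms(6)])
  have in_vars: "poly_in_vars V (\<Sum>k\<le>s. f k * of_nat (k choose j) * B ^ (k - j))"
    if "\<And>k. poly_in_vars V (f k)" for f j
    using that assms(2)
    by (intro poly_in_vars_sum poly_in_vars_mult poly_in_vars_power poly_in_vars_of_nat)
  fix j
  assume "j \<le> s"
  then show "(\<Sum>k\<le>s. \<phi> k * of_nat (k choose j) * B ^ (k - j)) =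
      (\<Sum>k\<le>s. \<psi> k * of_nat (k choose j) * B ^ (k - j))"
    using assms(5) sum_mult_power_add_eq[of _ "Xv i" B s]
    by (intro sum_Xv_power_coeffs_eq[OF assms(1) in_vars in_vars]) (simp_all add: assms(3,4))
qed

lemma sum_Xv_shift_power_coeffs:
  assumes "i \<notin> V" "poly_in_vars V B" "\<And>k. poly_in_vars V (\<phi> k)" "\<And>k. poly_in_vars V (\<theta> k)"
    and "(\<Sum>k\<le>s. \<phi> k * (Xv i + B) ^ k) = (\<Sum>k\<le>s. \<theta> k * Xv i ^ k)" "j \<le> s"
  shows "\<phi> j = (\<Sum>l\<le>s. \<theta> l * of_nat (l choose j) * (- B) ^ (l - j))"
proof -
  define \<psi> where "\<psi> j = (\<Sum>l\<le>s. \<theta> l * of_nat (l choose j) * (- B) ^ (l - j))" for j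
  have "(\<Sum>k\<le>s. \<psi> k * (Xv i + B) ^ k) = (\<Sum>l\<le>s. \<theta> l * ((Xv i + B) + - B) ^ l)"
    using sum_mult_power_add_eq[of \<theta> "Xv i + B" "- B" s] by (simp add: \<psi>_def)
  with assms(5) have eq: "(\<Sum>k\<le>s. \<phi> k * (Xv i + B) ^ k) = (\<Sum>k\<le>s. \<psi> k * (Xv i + B) ^ k)"
    by simp
  have \<psi>_in_vars: "poly_in_vars V (\<psi> k)" for k
    unfolding \<psi>_def using assms(2,4)
    by (intro poly_in_vars_sum poly_in_vars_mult poly_in_vars_power poly_in_vars_of_nat
        poly_in_vars_uminus)
  have "\<phi> j = \<psi> j"
    using assms(6) by (rule sum_Xv_shift_power_coeffs_eq[OF assms(1-3) \<psi>_in_vars eq])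
  then show ?thesis by (simp add: \<psi>_def)
qed

lemma sum_binomial_shift_eq:
  fixes \<theta> :: "nat \<Rightarrow> 'a::comm_ring_1"
  assumes "i \<le> s"
  shows "(\<Sum>l\<le>s. \<theta> l * of_nat (l choose i) * (- B) ^ (l - i)) =
         \<theta> i + (\<Sum>k=1..s-i. (-1) ^ k * of_nat ((k + i) choose k) * \<theta> (k + i) * B ^ k)"
proof -
  let ?f = "\<lambda>l. \<theta> l * of_nat (l choose i) * (- B) ^ (l - i)"
  have "(\<Sum>l\<le>s. ?f l) = (\<Sum>l=i..s. ?f l)"
    by (rule sum.mono_neutral_right) (auto simp: binomial_eq_0)
  also have "\<dots> = (\<Sum>k=0..s-i. ?f (k + i))"
    using sum.shift_bounds_cl_nat_ivl[of ?f 0 i "s - i"] assms by simp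
  also have "\<dots> = \<theta> i + (\<Sum>k=1..s-i. ?f (k + i))"
    by (simp add: sum.atLeast_Suc_atMost)
  also have "(\<Sum>k=1..s-i. ?f (k + i)) =
      (\<Sum>k=1..s-i. (-1) ^ k * of_nat ((k + i) choose k) * \<theta> (k + i) * B ^ k)"
  proof (intro sum.cong refl)
    fix k
    have "(k + i) choose i = (k + i) choose k"
      using binomial_symmetric[of i "k + i"] by simp
    moreover have "(- B) ^ (k + i - i) = (-1) ^ k * B ^ k"
      by (simp add: power_minus[of B])
    ultimately show "?f (k + i) = (-1) ^ k * of_nat ((k + i) choose k) * \<theta> (k + i) * B ^ k"
      by (simp only: mult_ac)
  qed
  finally show ?thesis .
qed

section \<open>Polynomials inside the free graded algebra\<close>

lemma emb_add: "emb (p + q) = ladd (emb p) (emb q)"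
  by (auto simp: emb_def ladd_def)

lemma ysgn_empty [simp]: "ysgn {} B = 1" "ysgn A {} = 1"
  by (simp_all add: ysgn_def)

lemma emb_mult: "emb (p * q) = lmul (emb p) (emb q)"
proof
  fix S
  have "(\<Sum>A\<in>Pow S. ysgn A (S - A) * emb p A * emb q (S - A)) = 0" if "S \<noteq> {}"
    using that by (intro sum.neutral) (auto simp: emb_def)
  then show "emb (p * q) S = lmul (emb p) (emb q) S"
    by (cases "S = {}") (simp_all add: emb_def lmul_def)
qed

lemma emb_const: "emb (const c) = lscale c lone"
  by (auto simp: emb_def lscale_def lone_def)

lemma emb_apply_empty [simp]: "emb p {} = p"
  by (simp add: emb_def)

lemma inj_emb: "inj emb"
  by (metis emb_apply_empty injI)

locale lam_alg_hom =
  fixes \<alpha> :: "lam \<Rightarrow> lam"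
  assumes ladd: "\<alpha> (ladd f g) = ladd (\<alpha> f) (\<alpha> g)"
    and lscale: "\<alpha> (lscale c f) = lscale c (\<alpha> f)"
    and lmul: "\<alpha> (lmul f g) = lmul (\<alpha> f) (\<alpha> g)"
    and lone: "\<alpha> lone = lone"
begin

lemma emb_eq_if_Xv_emb:
  assumes "\<And>i. \<alpha> (emb (Xv i)) \<in> range emb"
  shows "\<alpha> (emb p) = emb (\<alpha> (emb p) {})"
proof -
  have "\<alpha> (emb p) \<in> range emb"
    using poly_in_vars_UNIV[of p]
  proof (induction rule: poly_in_vars_induct)
    case (const c)
    show ?case by (metis emb_const lscale lone rangeI)
  next
    case (Xv i)
    show ?case by (rule assms)
  next
    case (add p q)
    then obtain p' q' where "\<alpha> (emb p) = emb p'" "\<alpha> (emb q) = emb q'"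
      by blast
    then have "\<alpha> (emb (p + q)) = emb (p' + q')"
      by (simp add: emb_add ladd)
    then show ?case by blast
  next
    case (mult p q)
    then obtain p' q' where "\<alpha> (emb p) = emb p'" "\<alpha> (emb q) = emb q'"
      by blast
    then have "\<alpha> (emb (p * q)) = emb (p' * q')"
      by (simp add: emb_mult lmul)
    then show ?case by blast
  qed
  then show ?thesis by auto
qed

end

locale lam_poly_restriction = lam_alg_hom +
  fixes \<rho> :: "mpoly \<Rightarrow> mpoly"
  assumes \<alpha>_emb: "\<alpha> (emb p) = emb (\<rho> p)"
begin

lemma \<rho>_add: "\<rho> (p + q) = \<rho> p + \<rho> q"
  using \<alpha>_emb[of "p + q"] by (simp add: emb_add ladd \<alpha>_emb inj_eq[OF inj_emb, symmetric])

lemma \<rho>_mult: "\<rho> (p * q) = \<rho> p * \<rho> q"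
  using \<alpha>_emb[of "p * q"] by (simp add: emb_mult lmul \<alpha>_emb inj_eq[OF inj_emb, symmetric])

lemma \<rho>_const: "\<rho> (const c) = const c"
  using \<alpha>_emb[of "const c"] by (simp add: emb_const lscale lone inj_eq[OF inj_emb, symmetric])

lemma \<rho>_power: "\<rho> (p ^ n) = \<rho> p ^ n"
  using \<rho>_const[of 1] by (induction n) (simp_all add: \<rho>_mult)

lemma \<rho>_sum: "\<rho> (\<Sum>k\<in>K. f k) = (\<Sum>k\<in>K. \<rho> (f k))"
  using \<rho>_const[of 0] by (induction K rule: infinite_finite_induct) (simp_all add: \<rho>_add)

lemma poly_in_vars_\<rho>:
  assumes "\<And>i. i \<in> V \<Longrightarrow> poly_in_vars W (\<rho> (Xv i))" "poly_in_vars V p"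
  shows "poly_in_vars W (\<rho> p)"
  using assms(2)
  by (induction rule: poly_in_vars_induct)
    (simp_all add: assms(1) \<rho>_const \<rho>_add \<rho>_mult poly_in_vars_const poly_in_vars_add poly_in_vars_mult)

end

lemma cochain_aut_lam_alg_hom: "cochain_aut d e P \<alpha> \<Longrightarrow> lam_alg_hom \<alpha>"
  by unfold_locales (simp_all add: cochain_aut_def)

section \<open>Degree arguments\<close>

lemma finite_idx_set [simp]: "finite (S :: idx set)"
proof -
  have "(UNIV :: idx set) = {I1, I2, I3, I4}"
    using idx.exhaust by auto
  then show ?thesis
    by (metis finite.emptyI finite.insertI finite_subset subset_UNIV)
qed

lemma ldec_low_order_terms:
  assumes "f \<in> ldec"
  shows "lookup (f {}) 0 = 0" "lookup (f {}) (single j 1) = 0" "lookup (f {j}) 0 = 0"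
proof -
  have "lookup (f {}) 0 = 0 \<and> (\<forall>j. lookup (f {}) (single j 1) = 0) \<and> (\<forall>j. lookup (f {j}) 0 = 0)"
    using assms
  proof (induction rule: ldec.induct)
    case ldec_zero
    then show ?case by (simp add: lzero_def)
  next
    case (ldec_step a b c)
    have a0: "lookup (a {}) 0 = 0" and b0: "lookup (b {}) 0 = 0"
      using ldec_step.hyps by (auto simp: lplus_def)
    have "Pow {j} = {{}, {j}}" for j :: idx
      by auto
    then have "lmul a b {} = a {} * b {}" "lmul a b {j} = a {} * b {j} + a {j} * b {}" for j
      by (simp_all add: lmul_def)
    then show ?case
      using ldec_step.IH lookup_mult_zero_if_const_zero[OF a0] lookup_mult_zero_if_const_zero[OF b0]
        lookup_mult_linear_zero_if_const_zero[OF a0 b0]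
      by (simp add: ladd_def lookup_add mult.commute[of _ "b {}"])
  qed
  then show "lookup (f {}) 0 = 0" "lookup (f {}) (single j 1) = 0" "lookup (f {j}) 0 = 0"
    by blast+
qed

lemma mdeg_expand:
  "mdeg d m = lookup m I1 * d I1 + lookup m I2 * d I2 + lookup m I3 * d I3 + lookup m I4 * d I4"
  by (simp add: mdeg_def allidx_def)

context
  fixes d e :: "idx \<Rightarrow> nat" and P :: "idx \<Rightarrow> mpoly"
  assumes setting: "setting d e P"
begin

lemma degree_nonzero: "d i \<noteq> 0"
  using setting by (simp add: setting_def)

lemma mdeg_eq_zero_iff: "mdeg d m = 0 \<longleftrightarrow> m = 0"
proof
  assume "mdeg d m = 0"
  then have "lookup m I1 = 0" "lookup m I2 = 0" "lookup m I3 = 0" "lookup m I4 = 0"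
    by (simp_all add: mdeg_expand degree_nonzero)
  then show "m = 0"
    by (intro poly_mapping_eqI) (metis idx.exhaust lookup_zero)
qed (simp add: mdeg_def)

lemma mdeg_le_top_degree:
  assumes "mdeg d m \<le> d I4" "lookup m I4 \<noteq> 0"
  shows "m = single I4 1"
proof -
  have "d I4 \<le> lookup m I4 * d I4"
    using assms(2) by simp
  with assms(1) have "lookup m I1 * d I1 = 0" "lookup m I2 * d I2 = 0" "lookup m I3 * d I3 = 0"
    "lookup m I4 * d I4 = d I4"
    unfolding mdeg_expand by linarith+
  then have "lookup m I1 = 0" "lookup m I2 = 0" "lookup m I3 = 0" "lookup m I4 = 1"
    by (simp_all add: degree_nonzero)
  then show ?thesis
    by (intro poly_mapping_eqI) (metis idx.exhaust lookup_single_eq lookup_single_not_eq)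
qed

text \<open>The least odd degree \<open>e I1\<close> is only attained by linear combinations of the \<open>y\<^sub>j\<close>,
  since all \<open>x\<^sub>i\<close> have even degree.\<close>
lemma lhom_least_odd_degree:
  assumes "lhom d e (e I1) g" "lookup (g S) m \<noteq> 0"
  shows "m = 0" "card S = 1"
proof -
  have e_ge: "e I1 \<le> e i" for i
    using setting by (cases i) (auto simp: setting_def)
  have "odd (e I1)" "even (mdeg d m)"
    using setting by (simp_all add: setting_def mdeg_expand)
  moreover have deg: "mdeg d m + ydeg e S = e I1"
    using assms by (simp add: lhom_def)
  ultimately have "S \<noteq> {}"
    by (auto simp: ydeg_def)
  have "card S * e I1 \<le> ydeg e S"
    using sum_bounded_below[of S "e I1" e] e_ge by (simp add: ydeg_def)
  with deg \<open>odd (e I1)\<close> have "card S \<le> 1"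
    by (metis le_add2 le_trans mult_le_cancel2 nat_mult_1 odd_pos)
  with \<open>S \<noteq> {}\<close> show "card S = 1"
    by (simp add: le_Suc_eq)
  then obtain j where "S = {j}"
    by (rule card_1_singletonE)
  with deg e_ge[of j] have "mdeg d m = 0"
    by (simp add: ydeg_def)
  then show "m = 0"
    by (simp add: mdeg_eq_zero_iff)
qed

lemma aut_sharp_fixes_ygen_I1:
  assumes "\<alpha> \<in> aut_sharp d e P"
  shows "\<alpha> (ygen I1) = ygen I1"
proof (intro ext poly_mapping_eqI)
  fix S m
  let ?g = "\<alpha> (ygen I1)"
  have "lhom d e (e I1) (ygen I1)"
    by (auto simp: lhom_def ygen_def lookup_one when_def ydeg_def mdeg_def)
  then have hom: "lhom d e (e I1) ?g"
    using assms by (auto simp: aut_sharp_def cochain_aut_def)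
  have "ygen I1 \<in> lplus"
    by (simp add: lplus_def ygen_def)
  then have "lsub ?g (ygen I1) \<in> ldec"
    using assms by (auto simp: aut_sharp_def)
  then have linear_part: "lookup (?g {j}) 0 = lookup (ygen I1 {j}) 0" for j
    using ldec_low_order_terms(3) by (fastforce simp: lsub_def lookup_minus)
  show "lookup (?g S) m = lookup (ygen I1 S) m"
  proof (cases "m = 0 \<and> card S = 1")
    case True
    then obtain j where "S = {j}" "m = 0"
      by (meson card_1_singletonE)
    then show ?thesis
      using linear_part by simp
  next
    case False
    then show ?thesis
      using lhom_least_odd_degree[OF hom] by (auto simp: ygen_def lookup_one)
  qed
qed

lemma ldiff_ygen_I1: "ldiff P (ygen I1) = emb (P I1)"
proof
  fix T
  have "ygen I1 (insert j T) = 0" if "T \<noteq> {}" "j \<notin> T" for j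
    using that by (auto simp: ygen_def)
  then show "ldiff P (ygen I1) T = emb (P I1) T"
    by (cases "T = {}") (simp_all add: ldiff_def emb_def ygen_def allidx_def)
qed

lemma aut_sharp_fixes_P_I1:
  assumes "\<alpha> \<in> aut_sharp d e P"
  shows "\<alpha> (emb (P I1)) = emb (P I1)"
proof -
  have "\<alpha> (ldiff P (ygen I1)) = ldiff P (\<alpha> (ygen I1))"
    using assms by (simp add: aut_sharp_def cochain_aut_def)
  then show ?thesis
    by (simp add: aut_sharp_fixes_ygen_I1[OF assms] ldiff_ygen_I1)
qed

text \<open>\<open>A\<close> has no constant or linear terms and has degree \<open>d i \<le> d I4\<close>, so \<open>x\<^sub>4\<close> cannot occur in it.\<close>
lemma aut_sharp_shift_free_of_I4:
  assumes "\<alpha> \<in> aut_sharp d e P" "\<alpha> (emb (Xv i)) = emb (Xv i + A)"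
  shows "poly_in_vars {I1, I2, I3} A"
proof -
  have "single i (1::nat) \<noteq> 0"
    by (metis lookup_single_eq lookup_zero one_neq_zero)
  then have "emb (Xv i) \<in> lplus"
    by (simp add: lplus_def emb_def Xv_def lookup_single)
  then have "lsub (\<alpha> (emb (Xv i))) (emb (Xv i)) \<in> ldec"
    using assms(1) by (auto simp: aut_sharp_def)
  moreover have "lsub (\<alpha> (emb (Xv i))) (emb (Xv i)) {} = A"
    by (simp add: assms(2) lsub_def)
  ultimately have no_linear: "lookup A (single j 1) = 0" for j
    using ldec_low_order_terms(2) by metis
  have "lhom d e (d i) (emb (Xv i))"
    by (cases i) (auto simp: lhom_def emb_def Xv_def lookup_single when_def ydeg_def mdeg_expand)
  moreover have "\<forall>n f. lhom d e n f \<longrightarrow> lhom d e n (\<alpha> f)"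
    using assms(1) by (simp add: aut_sharp_def cochain_aut_def)
  ultimately have "lhom d e (d i) (emb (Xv i + A))"
    using assms(2) by metis
  then have hom: "mdeg d m = d i" if "lookup (Xv i + A) m \<noteq> 0" for m
    using that by (auto simp: lhom_def ydeg_def dest: spec[of _ "{}"])
  have "d i \<le> d I4"
    using setting by (cases i) (auto simp: setting_def)
  have "lookup m I4 = 0" if "lookup A m \<noteq> 0" for m
  proof (rule ccontr)
    assume "lookup m I4 \<noteq> 0"
    have "m \<noteq> single i 1"
      using that no_linear by auto
    then have "mdeg d m \<le> d I4"
      using that hom \<open>d i \<le> d I4\<close> by (simp add: Xv_def lookup_add lookup_single)
    then have "m = single I4 1"
      using \<open>lookup m I4 \<noteq> 0\<close> by (rule mdeg_le_top_degree)
    with that no_linear show False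
      by simp
  qed
  then show ?thesis
    by (simp add: Compl_I4[symmetric] poly_in_vars_Compl_singleton_iff)
qed

end

theorem proposition3p3:
  fixes d e :: "idx \<Rightarrow> nat" and P A :: "idx \<Rightarrow> mpoly" and \<alpha> :: "lam \<Rightarrow> lam"
    and \<theta> :: "nat \<Rightarrow> mpoly" and s :: nat
  assumes "setting d e P"
    and "\<alpha> \<in> aut_sharp d e P"
    and "\<alpha> (emb (Xv I1)) = emb (Xv I1)"
    and "\<forall>i\<in>{I2, I3, I4}. \<alpha> (emb (Xv i)) = emb (Xv i + A i)"
    and "\<forall>i. poly_in_vars allidx (A i)"
    and "\<forall>k. poly_in_vars {I1, I2, I3} (\<theta> k)"
    and "\<theta> s \<noteq> 0"
    and "P I1 = (\<Sum>k\<le>s. \<theta> k * Xv I4 ^ k)"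
  shows "\<forall>i<s. \<alpha> (emb (\<theta> i)) =
           emb (\<theta> i + (\<Sum>k=1..s-i. (-1) ^ k * of_nat ((k + i) choose k) * \<theta> (k + i) * A I4 ^ k))"
proof -
  interpret lam_alg_hom \<alpha>
    using assms(2) unfolding aut_sharp_def by (blast intro: cochain_aut_lam_alg_hom)
  have Xv_image: "\<alpha> (emb (Xv i)) = emb (if i = I1 then Xv I1 else Xv i + A i)" for i
    using assms(3,4) by (cases i) auto
  define \<rho> where "\<rho> p = \<alpha> (emb p) {}" for p
  interpret lam_poly_restriction \<alpha> \<rho>
    by unfold_locales (unfold \<rho>_def, rule emb_eq_if_Xv_emb, simp add: Xv_image)
  have \<rho>_Xv: "\<rho> (Xv i) = (if i = I1 then Xv I1 else Xv i + A i)" for i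
    using Xv_image[of i] by (simp add: \<alpha>_emb inj_eq[OF inj_emb])
  have A_in_vars: "poly_in_vars {I1, I2, I3} (A i)" if "i \<noteq> I1" for i
    using aut_sharp_shift_free_of_I4[OF assms(1,2)] Xv_image[of i] that by simp
  have "poly_in_vars {I1, I2, I3} (\<rho> (Xv i))" if "i \<in> {I1, I2, I3}" for i
    using that A_in_vars[of I2] A_in_vars[of I3]
    by (auto simp: \<rho>_Xv poly_in_vars_Xv intro!: poly_in_vars_add)
  then have \<theta>_images: "poly_in_vars {I1, I2, I3} (\<rho> (\<theta> k))" for k
    using assms(6) by (blast intro: poly_in_vars_\<rho>)
  have "\<rho> (P I1) = P I1"
    using aut_sharp_fixes_P_I1[OF assms(1,2)] by (simp add: \<alpha>_emb inj_eq[OF inj_emb])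
  then have "(\<Sum>k\<le>s. \<rho> (\<theta> k) * (Xv I4 + A I4) ^ k) = (\<Sum>k\<le>s. \<theta> k * Xv I4 ^ k)"
    by (simp add: assms(8) \<rho>_sum \<rho>_mult \<rho>_power \<rho>_Xv)
  then have "\<rho> (\<theta> i) = (\<Sum>l\<le>s. \<theta> l * of_nat (l choose i) * (- A I4) ^ (l - i))" if "i \<le> s" for i
    using that assms(6) A_in_vars[of I4] \<theta>_images
    by (intro sum_Xv_shift_power_coeffs[where V = "{I1, I2, I3}"]) auto
  then show ?thesis
    by (simp add: \<alpha>_emb sum_binomial_shift_eq)
qed

end
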